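(* Let $U\in\mathcal L(\mathcal K)$ and $T,V,K\in\mathcal L(\mathcal H)$, $X\in\mathcal L(\mathcal K,\mathcal H)$, where $U$ and $V$ are unitary, $K$ is compact, $T=V+K$, $XU=TX$, and $X\mathcal K$ is dense in $\mathcal H$. Then $\sigma(T)\subset\mathbb T$.
   Context: $\sigma(T)$ denotes the spectrum of $T$ and $\mathbb T$ the unit circle. *)

theory Defs
  imports "HOL-Analysis.Analysis"
begin

class complex_vector = real_vector +
  fixes scaleC :: "complex \<Rightarrow> 'a \<Rightarrow> 'a"
  assumes scaleC_add_right: "scaleC a (x + y) = scaleC a x + scaleC a y"
    and scaleC_add_left: "scaleC (a + b) x = scaleC a x + scaleC b x"
    and scaleC_scaleC: "scaleC a (scaleC b x) = scaleC (a * b) x"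
    and scaleC_one: "scaleC 1 x = x"
    and scaleR_scaleC: "scaleR r x = scaleC (complex_of_real r) x"

class complex_inner = complex_vector + real_normed_vector +
  fixes cinner :: "'a \<Rightarrow> 'a \<Rightarrow> complex"
  assumes cinner_cnj: "cinner x y = cnj (cinner y x)"
    and cinner_add_left: "cinner (x + y) z = cinner x z + cinner y z"
    and cinner_scaleC_left: "cinner (scaleC a x) y = cnj a * cinner x y"
    and cinner_self_norm: "cinner x x = complex_of_real ((norm x)\<^sup>2)"

class chilbert_space = complex_inner + complete_space

definition bounded_clinear :: "('a::complex_inner \<Rightarrow> 'b::complex_inner) \<Rightarrow> bool" where
  "bounded_clinear f \<longleftrightarrow> bounded_linear f \<and> (\<forall>a x. f (scaleC a x) = scaleC a (f x))"

text \<open>Unitary operator: a bounded linear bijection preserving the inner product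
(equivalently U*U = UU* = I).\<close>
definition unitary_op :: "('a::complex_inner \<Rightarrow> 'a) \<Rightarrow> bool" where
  "unitary_op U \<longleftrightarrow> bounded_clinear U \<and> bij U \<and> (\<forall>x y. cinner (U x) (U y) = cinner x y)"

definition compact_op :: "('a::complex_inner \<Rightarrow> 'b::complex_inner) \<Rightarrow> bool" where
  "compact_op K \<longleftrightarrow> bounded_clinear K \<and> compact (closure (K ` ball 0 1))"

definition op_invertible :: "('a::complex_inner \<Rightarrow> 'a) \<Rightarrow> bool" where
  "op_invertible A \<longleftrightarrow> (\<exists>B. bounded_clinear B \<and> B \<circ> A = id \<and> A \<circ> B = id)"

definition op_spectrum :: "('a::complex_inner \<Rightarrow> 'a) \<Rightarrow> complex set" where
  "op_spectrum T = {z. \<not> op_invertible (\<lambda>x. T x - scaleC z x)}"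

end

(* For |z| <> 1 the operator V - z is invertible, since V is an isometry; so T - z is a
   compact perturbation of an invertible operator W.  The intertwining relation gives
   (T - z) X = X (U - z) with U - z onto, so the range of T - z contains the dense range
   of X.  Riesz-Schauder theory then makes T - z invertible: writing R = W^-1, the
   operator R (T - z) = I + R K has closed range, hence is onto, hence injective (the
   kernels of its powers cannot increase for ever), hence bounded below. *)

theory Submission
  imports Defs
begin

lemma closed_near_best_approximation:
  fixes w :: "'a::metric_space"
  assumes "closed M" "M \<noteq> {}" "w \<notin> M"
  shows "\<exists>m0\<in>M. \<forall>m\<in>M. dist w m0 \<le> 2 * dist w m"
proof -
  have "infdist w M > 0" using infdist_pos_not_in_closed assms by blast
  then have "(INF m\<in>M. dist w m) < 2 * infdist w M" using infdist_notempty[OF assms(2)] by simp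
  then obtain m0 where m0: "m0 \<in> M" "dist w m0 < 2 * infdist w M"
    using assms(2) by (subst (asm) cINF_less_iff) (auto intro: bdd_belowI2[where m=0])
  have "dist w m0 \<le> 2 * dist w m" if "m \<in> M" for m
    using infdist_le[OF that, of w] m0(2) by linarith
  with m0(1) show ?thesis by blast
qed

text \<open>The distance to N need not be attained, hence the constant 1/2.\<close>

lemma riesz_lemma:
  fixes N :: "'a::real_normed_vector set"
  assumes "subspace N" "closed N" "w \<notin> N"
  shows "\<exists>m\<in>N. w - m \<noteq> 0 \<and> (\<forall>n\<in>N. 1/2 \<le> norm (sgn (w - m) - n))"
proof -
  obtain m where m: "m \<in> N" "\<And>m'. m' \<in> N \<Longrightarrow> dist w m \<le> 2 * dist w m'"
    using closed_near_best_approximation[OF assms(2) _ assms(3)] assms(1)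
    by (metis empty_iff subspace_0)
  define t where "t = norm (w - m)"
  have t: "t > 0" using m(1) assms(3) by (auto simp: t_def)
  have "1/2 \<le> norm (sgn (w - m) - n)" if "n \<in> N" for n
  proof -
    have "m + t *\<^sub>R n \<in> N" using assms(1) m(1) that by (simp add: subspace_add subspace_scale)
    then have "t \<le> 2 * norm (w - m - t *\<^sub>R n)" using m(2) by (simp add: t_def dist_norm diff_diff_eq)
    moreover have "w - m - t *\<^sub>R n = t *\<^sub>R (sgn (w - m) - n)"
      using t by (simp add: sgn_div_norm t_def algebra_simps)
    ultimately have "t * 1 \<le> t * (2 * norm (sgn (w - m) - n))" using t by simp
    then show ?thesis using t by (simp only: mult_le_cancel_left_pos)
  qed
  with m(1) t show ?thesis by (auto simp: t_def)
qed

lemma subspace_kernel_bounded_linear: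
  assumes "bounded_linear f"
  shows "subspace {x. f x = 0}" and "closed {x. f x = 0}"
  using assms by (auto simp: subspace_def linear_simps
      intro!: closed_Collect_eq linear_continuous_on continuous_on_const)

definition compactly_mapping :: "('a::real_normed_vector \<Rightarrow> 'b::real_normed_vector) \<Rightarrow> bool" where
  "compactly_mapping Q \<longleftrightarrow>
     (\<forall>y::nat \<Rightarrow> 'a. bounded (range y) \<longrightarrow> (\<exists>r l. strict_mono r \<and> (\<lambda>n. Q (y (r n))) \<longlonglongrightarrow> l))"

lemma compactly_mappingD:
  fixes y :: "nat \<Rightarrow> 'a::real_normed_vector"
  assumes "compactly_mapping Q" "bounded (range y)"
  obtains r l where "strict_mono r" "(\<lambda>n. Q (y (r n))) \<longlonglongrightarrow> l"
  using assms unfolding compactly_mapping_def by meson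

lemma compactly_mapping_compose:
  assumes "compactly_mapping Q" "bounded_linear R"
  shows "compactly_mapping (\<lambda>x. R (Q x))"
  unfolding compactly_mapping_def
proof (intro allI impI)
  fix y :: "nat \<Rightarrow> 'a" assume "bounded (range y)"
  then obtain r l where "strict_mono r" "(\<lambda>n. Q (y (r n))) \<longlonglongrightarrow> l"
    by (rule compactly_mappingD[OF assms(1)])
  then show "\<exists>r l. strict_mono r \<and> (\<lambda>n. R (Q (y (r n)))) \<longlonglongrightarrow> l"
    using bounded_linear.tendsto[OF assms(2)] by blast
qed

lemma compactly_mapping_no_separated_image:
  fixes y :: "nat \<Rightarrow> 'a::real_normed_vector"
  assumes "compactly_mapping Q" "bounded (range y)" "e > 0"
    and "\<And>k n. k < n \<Longrightarrow> e \<le> norm (Q (y n) - Q (y k))"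
  shows False
proof -
  obtain r l where r: "strict_mono r" "(\<lambda>n. Q (y (r n))) \<longlonglongrightarrow> l"
    using assms(1,2) by (rule compactly_mappingD)
  have "Cauchy (\<lambda>n. Q (y (r n)))" using r(2) by (rule LIMSEQ_imp_Cauchy)
  then obtain n0 where "\<forall>m\<ge>n0. \<forall>n\<ge>n0. dist (Q (y (r m))) (Q (y (r n))) < e"
    using assms(3) unfolding Cauchy_def by blast
  then have "norm (Q (y (r (Suc n0))) - Q (y (r n0))) < e" by (simp add: dist_norm)
  moreover have "r n0 < r (Suc n0)" using r(1) by (simp add: strict_mono_def)
  ultimately show False using assms(4) by fastforce
qed

locale id_plus_compact =
  fixes Q :: "'a::real_normed_vector \<Rightarrow> 'a"
  assumes bounded_linear_Q: "bounded_linear Q" and compactly_mapping_Q: "compactly_mapping Q"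
begin

definition S :: "'a \<Rightarrow> 'a" where "S x = x + Q x"

lemma bounded_linear_S: "bounded_linear S"
  unfolding S_def[abs_def] by (intro bounded_linear_add bounded_linear_ident bounded_linear_Q)

lemma convergent_subseq_of_convergent_image:
  fixes y :: "nat \<Rightarrow> 'a"
  assumes "bounded (range y)" "(\<lambda>n. S (y n)) \<longlonglongrightarrow> v"
  shows "\<exists>r p. strict_mono r \<and> (\<lambda>n. y (r n)) \<longlonglongrightarrow> p \<and> S p = v"
proof -
  obtain r l where r: "strict_mono r" "(\<lambda>n. Q (y (r n))) \<longlonglongrightarrow> l"
    using compactly_mapping_Q assms(1) by (rule compactly_mappingD)
  have "(\<lambda>n. S (y (r n))) \<longlonglongrightarrow> v"
    using LIMSEQ_subseq_LIMSEQ[OF assms(2) r(1)] by (simp add: comp_def)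
  then have "(\<lambda>n. S (y (r n)) - Q (y (r n))) \<longlonglongrightarrow> v - l" using r(2) by (intro tendsto_intros)
  then have p: "(\<lambda>n. y (r n)) \<longlonglongrightarrow> v - l" by (simp add: S_def)
  then have "(\<lambda>n. S (y (r n))) \<longlonglongrightarrow> S (v - l)" by (rule bounded_linear.tendsto[OF bounded_linear_S])
  with \<open>(\<lambda>n. S (y (r n))) \<longlonglongrightarrow> v\<close> have "S (v - l) = v" using LIMSEQ_unique by blast
  with r(1) p show ?thesis by blast
qed

lemma kernel_distance_bound: "\<exists>c>0. \<forall>x. \<exists>m. S m = 0 \<and> c * norm (x - m) \<le> norm (S x)"
proof (rule ccontr)
  assume neg: "\<not> ?thesis"
  define N where "N = {m. S m = 0}"
  have N: "subspace N" "closed N"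
    unfolding N_def by (intro subspace_kernel_bounded_linear bounded_linear_S)+
  have "\<forall>c>0. \<exists>x. \<forall>m\<in>N. norm (S x) < c * norm (x - m)"
  proof (intro allI impI)
    fix c :: real assume "c > 0"
    then have "\<not> (\<forall>x. \<exists>m. S m = 0 \<and> c * norm (x - m) \<le> norm (S x))" using neg by blast
    then show "\<exists>x. \<forall>m\<in>N. norm (S x) < c * norm (x - m)" by (auto simp: N_def not_le)
  qed
  moreover have "\<forall>n. inverse (real (Suc n)) > 0" by simp
  ultimately have "\<forall>n. \<exists>x. \<forall>m\<in>N. norm (S x) < inverse (real (Suc n)) * norm (x - m)"
    by blast
  then obtain x where x: "\<And>n m. m \<in> N \<Longrightarrow> norm (S (x n)) < inverse (real (Suc n)) * norm (x n - m)"
    by metis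
  have "x n \<notin> N" for n using x[of "x n" n] by auto
  then have "\<forall>n. \<exists>m\<in>N. x n - m \<noteq> 0 \<and> (\<forall>p\<in>N. 1/2 \<le> norm (sgn (x n - m) - p))"
    using riesz_lemma[OF N] by blast
  then obtain m where m: "\<And>n. m n \<in> N" "\<And>n. x n - m n \<noteq> 0"
    "\<And>n p. p \<in> N \<Longrightarrow> 1/2 \<le> norm (sgn (x n - m n) - p)"
    by metis
  define y where "y n = sgn (x n - m n)" for n
  have "norm (S (y n)) \<le> inverse (real (Suc n))" for n
  proof -
    have "S (m n) = 0" using m(1) by (simp add: N_def)
    then have "norm (S (y n)) = norm (S (x n)) / norm (x n - m n)"
      by (simp add: y_def sgn_div_norm linear_simps[OF bounded_linear_S] divide_inverse)
    then show ?thesis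
      using less_imp_le[OF x[OF m(1), of n]] m(2)[of n] by (simp add: pos_divide_le_eq mult.commute)
  qed
  then have "(\<lambda>n. S (y n)) \<longlonglongrightarrow> 0"
    by (intro Lim_null_comparison[OF always_eventually LIMSEQ_inverse_real_of_nat]) simp
  moreover have "bounded (range y)"
    using m(2) by (intro boundedI[of _ 1]) (auto simp: y_def norm_sgn)
  ultimately obtain r p where r: "(\<lambda>n. y (r n)) \<longlonglongrightarrow> p" and "S p = 0"
    using convergent_subseq_of_convergent_image by blast
  then have "1/2 \<le> norm (y (r n) - p)" for n using m(3) by (simp add: y_def N_def)
  moreover obtain n where "norm (y (r n) - p) < 1/2"
    using LIMSEQ_D[OF r, of "1/2"] by auto
  ultimately show False by (meson not_le)
qed

lemma closed_range: "closed (range S)"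
  unfolding closed_sequential_limits
proof (intro allI impI, elim conjE)
  fix u v assume u: "\<forall>n. u n \<in> range S" and lim: "u \<longlonglongrightarrow> v"
  obtain c where c: "c > 0" "\<And>x. \<exists>m. S m = 0 \<and> c * norm (x - m) \<le> norm (S x)"
    using kernel_distance_bound by blast
  have "\<exists>p. S p = u n \<and> c * norm p \<le> norm (u n)" for n
  proof -
    obtain x where x: "u n = S x" using u by blast
    moreover obtain m where "S m = 0" "c * norm (x - m) \<le> norm (S x)" using c(2) by blast
    ultimately have "S (x - m) = u n" "c * norm (x - m) \<le> norm (u n)"
      by (simp_all add: linear_simps[OF bounded_linear_S])
    then show ?thesis by blast
  qed
  then obtain p where p: "\<And>n. S (p n) = u n" "\<And>n. c * norm (p n) \<le> norm (u n)" by metis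
  have "Bseq u" using lim convergent_def convergent_imp_Bseq by blast
  then obtain B where B: "\<And>n. norm (u n) \<le> B" by (meson BseqE)
  have "norm (p n) \<le> B / c" for n
    using order_trans[OF p(2) B] c(1) by (simp add: pos_le_divide_eq mult.commute)
  then have "bounded (range p)" by (auto intro: boundedI)
  moreover have "(\<lambda>n. S (p n)) \<longlonglongrightarrow> v" using lim by (simp add: p(1))
  ultimately have "\<exists>r q. strict_mono r \<and> (\<lambda>n. p (r n)) \<longlonglongrightarrow> q \<and> S q = v"
    by (rule convergent_subseq_of_convergent_image)
  then show "v \<in> range S" by blast
qed

lemma no_strictly_increasing_invariant_chain:
  fixes N :: "nat \<Rightarrow> 'a set"
  assumes N: "\<And>n. subspace (N n)" "\<And>n. closed (N n)"
    and strict: "\<And>n. N n \<subset> N (Suc n)" and invariant: "\<And>n. S ` N (Suc n) \<subseteq> N n"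
  shows False
proof -
  have mono: "N k \<subseteq> N n" if "k \<le> n" for k n
    using lift_Suc_mono_le[of N, OF _ that] strict by blast
  have "\<forall>n. \<exists>w. w \<in> N (Suc n) \<and> w \<notin> N n" using strict by blast
  then obtain w where w: "\<And>n. w n \<in> N (Suc n)" "\<And>n. w n \<notin> N n" by metis
  have "\<forall>n. \<exists>m\<in>N n. w n - m \<noteq> 0 \<and> (\<forall>p\<in>N n. 1/2 \<le> norm (sgn (w n - m) - p))"
    using riesz_lemma[OF N w(2)] by blast
  then obtain m where m: "\<And>n. m n \<in> N n" "\<And>n. w n - m n \<noteq> 0"
    "\<And>n p. p \<in> N n \<Longrightarrow> 1/2 \<le> norm (sgn (w n - m n) - p)"
    by metis
  define y where "y n = sgn (w n - m n)" for n
  have y: "y n \<in> N (Suc n)" for n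
    using mono[of n "Suc n"] m(1) w(1) N(1)
    by (auto simp: y_def sgn_div_norm intro!: subspace_scale subspace_diff)
  have "1/2 \<le> norm (Q (y n) - Q (y k))" if "k < n" for k n
  proof -
    define z where "z = S (y n) - S (y k) + y k"
    have "S (y n) \<in> N n" "S (y k) \<in> N n" "y k \<in> N n"
      using invariant y mono[of k n] mono[of "Suc k" n] that by auto
    then have "z \<in> N n" unfolding z_def by (meson N(1) subspace_add subspace_diff)
    then have "1/2 \<le> norm (y n - z)" unfolding y_def by (rule m(3))
    moreover have "y n - z = - (Q (y n) - Q (y k))" by (simp add: z_def S_def)
    ultimately show ?thesis by (simp only: norm_minus_cancel)
  qed
  moreover have "bounded (range y)"
    by (intro boundedI[of _ 1]) (auto simp: y_def norm_sgn)
  ultimately show False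
    using compactly_mapping_no_separated_image[OF compactly_mapping_Q, of y "1/2"] by simp
qed

lemma surj_imp_inj:
  assumes "surj S"
  shows "inj S"
proof (rule ccontr)
  assume "\<not> inj S"
  then obtain a b where "a \<noteq> b" "S a = S b" unfolding inj_def by blast
  then have ab: "a - b \<noteq> 0" "S (a - b) = 0" by (simp_all add: linear_simps[OF bounded_linear_S])
  have bl: "bounded_linear (S ^^ n)" for n
  proof (induction n)
    case 0
    show ?case using bounded_linear_ident by (simp add: id_def)
  next
    case (Suc n)
    show ?case using bounded_linear_compose[OF bounded_linear_S Suc.IH] by (simp add: comp_def)
  qed
  define N where "N n = {x. (S ^^ n) x = 0}" for n
  show False
  proof (rule no_strictly_increasing_invariant_chain)
    show "subspace (N n)" "closed (N n)" for n
      unfolding N_def by (intro subspace_kernel_bounded_linear bl)+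
    show "S ` N (Suc n) \<subseteq> N n" for n
      by (auto simp: N_def funpow_Suc_right simp del: funpow.simps)
    show "N n \<subset> N (Suc n)" for n
    proof
      show "N n \<subseteq> N (Suc n)"
        using bounded_linear_S by (auto simp: N_def linear_simps)
      obtain w where "a - b = (S ^^ n) w" using surjD[OF surj_fn[OF assms]] by blast
      then have "w \<in> N (Suc n)" "w \<notin> N n" using ab by (auto simp: N_def)
      then show "N n \<noteq> N (Suc n)" by blast
    qed
  qed
qed

lemma inj_imp_bounded_below:
  assumes "inj S"
  shows "\<exists>c>0. \<forall>x. c * norm x \<le> norm (S x)"
proof -
  obtain c where c: "c > 0" "\<forall>x. \<exists>m. S m = 0 \<and> c * norm (x - m) \<le> norm (S x)"
    using kernel_distance_bound by blast
  have "c * norm x \<le> norm (S x)" for x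
  proof -
    obtain m where m: "S m = 0" "c * norm (x - m) \<le> norm (S x)" using c(2) by blast
    have "m = 0" by (rule injD[OF assms]) (simp add: m(1) linear_simps[OF bounded_linear_S])
    with m(2) show ?thesis by simp
  qed
  with c(1) show ?thesis by blast
qed

end

lemma norm_scaleC: "norm (scaleC a (x::'a::complex_inner)) = cmod a * norm x"
proof -
  have inner: "cinner x (scaleC a x) = a * cinner x x"
    by (subst cinner_cnj) (simp add: cinner_scaleC_left cinner_cnj[symmetric])
  have "complex_of_real ((norm (scaleC a x))\<^sup>2) = cinner (scaleC a x) (scaleC a x)"
    by (rule cinner_self_norm[symmetric])
  also have "\<dots> = (cnj a * a) * cinner x x" by (simp add: cinner_scaleC_left inner)
  also have "cnj a * a = complex_of_real ((cmod a)\<^sup>2)"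
    by (simp add: complex_norm_square[symmetric] mult.commute)
  also have "cinner x x = complex_of_real ((norm x)\<^sup>2)" by (rule cinner_self_norm)
  also have "complex_of_real ((cmod a)\<^sup>2) * complex_of_real ((norm x)\<^sup>2)
      = complex_of_real ((cmod a * norm x)\<^sup>2)"
    by (simp only: of_real_mult[symmetric] power_mult_distrib)
  finally have "(norm (scaleC a x))\<^sup>2 = (cmod a * norm x)\<^sup>2" by (simp only: of_real_eq_iff)
  then show ?thesis by (simp add: power2_eq_iff_nonneg)
qed

lemma scaleC_diff_right: "scaleC a (x - y) = scaleC a x - scaleC a (y::'a::complex_vector)"
  using scaleC_add_right[of a "x - y" y] by (simp add: algebra_simps)

lemma bounded_clinear_minus_scaleC:
  assumes "bounded_clinear T"
  shows "bounded_clinear (\<lambda>x::'a::complex_inner. T x - scaleC z x)"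
proof -
  have "bounded_linear (\<lambda>x::'a. scaleC z x)"
    by (rule bounded_linear_intro[where K="cmod z"])
      (simp_all add: scaleC_add_right scaleR_scaleC scaleC_scaleC mult.commute norm_scaleC)
  then have "bounded_linear (\<lambda>x. T x - scaleC z x)"
    using assms by (intro bounded_linear_sub) (simp_all add: bounded_clinear_def)
  then show ?thesis
    using assms by (simp add: bounded_clinear_def scaleC_diff_right scaleC_scaleC mult.commute)
qed

lemma bounded_clinear_compose:
  "bounded_clinear f \<Longrightarrow> bounded_clinear g \<Longrightarrow> bounded_clinear (\<lambda>x. f (g x))"
  by (simp add: bounded_clinear_def bounded_linear_compose)

lemma bounded_clinear_add:
  "bounded_clinear f \<Longrightarrow> bounded_clinear g \<Longrightarrow> bounded_clinear (\<lambda>x. f x + g x)"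
  by (simp add: bounded_clinear_def bounded_linear_add scaleC_add_right)

lemma op_invertibleI:
  fixes A :: "'a::complex_inner \<Rightarrow> 'a"
  assumes "bounded_clinear A" "surj A" "c > 0" "\<And>x. c * norm x \<le> norm (A x)"
  shows "op_invertible A"
proof -
  have bl: "bounded_linear A" and cl: "\<And>a x. A (scaleC a x) = scaleC a (A x)"
    using assms(1) by (auto simp: bounded_clinear_def)
  have inj: "inj A"
  proof (rule injI)
    fix x y assume "A x = A y"
    then have "c * norm (x - y) \<le> 0" using assms(4)[of "x - y"] by (simp add: linear_simps[OF bl])
    then show "x = y" using assms(3) by (simp add: mult_le_0_iff)
  qed
  define B where "B = inv A"
  have AB: "A (B y) = y" and BA: "B (A x) = x" for x y
    using assms(2) inj by (simp_all add: B_def surj_f_inv_f inv_f_f)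
  have "bounded_linear B"
  proof (rule bounded_linear_intro)
    show "B (x + y) = B x + B y" for x y by (rule injD[OF inj]) (simp add: AB linear_simps[OF bl])
    show "B (r *\<^sub>R x) = r *\<^sub>R B x" for r x by (rule injD[OF inj]) (simp add: AB linear_simps[OF bl])
    show "norm (B y) \<le> norm y * (1 / c)" for y
      using assms(4)[of "B y"] assms(3) by (simp add: AB field_simps)
  qed
  moreover have "B (scaleC a x) = scaleC a (B x)" for a x
    by (rule injD[OF inj]) (simp add: AB cl)
  ultimately have "bounded_clinear B" by (simp add: bounded_clinear_def)
  moreover have "B \<circ> A = id" "A \<circ> B = id" by (auto simp: AB BA)
  ultimately show ?thesis unfolding op_invertible_def by blast
qed

lemma op_invertible_comp:
  assumes "op_invertible A" "op_invertible B"
  shows "op_invertible (A \<circ> B)"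
proof -
  obtain A' B' where "bounded_clinear A'" "A' \<circ> A = id" "A \<circ> A' = id"
    "bounded_clinear B'" "B' \<circ> B = id" "B \<circ> B' = id"
    using assms unfolding op_invertible_def by blast
  then show ?thesis unfolding op_invertible_def
    by (intro exI[of _ "B' \<circ> A'"]) (auto simp: bounded_clinear_compose comp_def fun_eq_iff)
qed

lemma compact_op_imp_compactly_mapping:
  assumes "compact_op K"
  shows "compactly_mapping K"
  unfolding compactly_mapping_def
proof (intro allI impI)
  fix y :: "nat \<Rightarrow> 'a" assume "bounded (range y)"
  then obtain B where B: "B > 0" "\<And>n. norm (y n) \<le> B"
    by (meson bounded_pos rangeI)
  have bl: "bounded_linear K" and cK: "compact (closure (K ` ball 0 1))"
    using assms by (auto simp: compact_op_def bounded_clinear_def)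
  define q where "q n = (1 / (2 * B)) *\<^sub>R y n" for n
  have "q n \<in> ball 0 1" for n
  proof -
    have "norm (y n) < 2 * B" using B(1) B(2)[of n] by linarith
    then show ?thesis using B(1) by (simp add: q_def divide_simps)
  qed
  then have "\<forall>n. K (q n) \<in> closure (K ` ball 0 1)" using closure_subset by blast
  then obtain l r where r: "strict_mono r" "((\<lambda>n. K (q n)) \<circ> r) \<longlonglongrightarrow> l"
    using compact_imp_seq_compact[OF cK] unfolding seq_compact_def by metis
  then have "(\<lambda>n. (2 * B) *\<^sub>R K (q (r n))) \<longlonglongrightarrow> (2 * B) *\<^sub>R l"
    by (intro tendsto_intros) (simp add: comp_def)
  moreover have "(2 * B) *\<^sub>R K (q (r n)) = K (y (r n))" for n
    using B by (simp add: q_def linear_simps[OF bl])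
  ultimately show "\<exists>r l. strict_mono r \<and> (\<lambda>n. K (y (r n))) \<longlonglongrightarrow> l" using r(1) by auto
qed

lemma norm_unitary:
  assumes "unitary_op U"
  shows "norm (U x) = norm x"
proof -
  have "cinner (U x) (U x) = cinner x x" using assms by (simp add: unitary_op_def)
  then have "complex_of_real ((norm (U x))\<^sup>2) = complex_of_real ((norm x)\<^sup>2)"
    by (simp only: cinner_self_norm)
  then have "(norm (U x))\<^sup>2 = (norm x)\<^sup>2" by (simp only: of_real_eq_iff)
  then show ?thesis by (simp add: power2_eq_iff_nonneg)
qed

lemma unitary_minus_scaleC_bounded_below:
  assumes "unitary_op U"
  shows "\<bar>1 - cmod z\<bar> * norm x \<le> norm (U x - scaleC z x)"
proof -
  have "\<bar>1 - cmod z\<bar> * norm x = \<bar>(1 - cmod z) * norm x\<bar>" by (simp add: abs_mult)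
  also have "\<dots> = \<bar>norm (U x) - norm (scaleC z x)\<bar>"
    using assms by (simp add: norm_unitary norm_scaleC left_diff_distrib)
  also have "\<dots> \<le> norm (U x - scaleC z x)" by (rule norm_triangle_ineq3)
  finally show ?thesis .
qed

lemma surj_unitary_minus_scaleC:
  fixes U :: "'a::chilbert_space \<Rightarrow> 'a"
  assumes U: "unitary_op U" and z: "cmod z \<noteq> 1"
  shows "surj (\<lambda>x. U x - scaleC z x)"
proof -
  have bl: "bounded_linear U" using U by (simp add: unitary_op_def bounded_clinear_def)
  have dist_U: "dist (U a) (U b) = dist a b" for a b
    using norm_unitary[OF U, of "a - b"] by (simp add: dist_norm linear_simps[OF bl])
  have "\<exists>x. U x - scaleC z x = y" for y
  proof (cases "cmod z > 1")
    case True
    define f where "f x = scaleC (inverse z) (U x - y)" for x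
    have "dist (f a) (f b) \<le> inverse (cmod z) * dist a b" for a b
      using dist_U[of a b]
      by (simp add: f_def dist_norm norm_scaleC norm_inverse scaleC_diff_right[symmetric])
    then obtain x where x: "f x = x"
      using banach_fix_type[of "inverse (cmod z)" f] True by (auto simp: inverse_less_1_iff)
    have "z \<noteq> 0" using True by auto
    then have "scaleC z (f x) = U x - y" by (simp add: f_def scaleC_scaleC scaleC_one)
    with x have "U x - scaleC z x = y" by (simp add: algebra_simps)
    then show ?thesis by blast
  next
    case False
    with z have z1: "cmod z < 1" by simp
    have U_inv: "U (inv U v) = v" for v
      using U by (simp add: unitary_op_def bij_is_surj surj_f_inv_f)
    define f where "f x = inv U (y + scaleC z x)" for x
    have "dist (f a) (f b) \<le> cmod z * dist a b" for a b
      using dist_U[of "f a" "f b"]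
      by (simp add: f_def U_inv dist_norm norm_scaleC scaleC_diff_right[symmetric])
    then obtain x where "f x = x" using banach_fix_type[of "cmod z" f] z1 by auto
    then have "U x = y + scaleC z x" using U_inv by (metis f_def)
    then have "U x - scaleC z x = y" by simp
    then show ?thesis by blast
  qed
  then show ?thesis by (metis surj_def)
qed

lemma op_invertible_unitary_minus_scaleC:
  fixes U :: "'a::chilbert_space \<Rightarrow> 'a"
  assumes "unitary_op U" "cmod z \<noteq> 1"
  shows "op_invertible (\<lambda>x. U x - scaleC z x)"
proof (rule op_invertibleI)
  show "bounded_clinear (\<lambda>x. U x - scaleC z x)"
    using assms(1) by (intro bounded_clinear_minus_scaleC) (simp add: unitary_op_def)
  show "surj (\<lambda>x. U x - scaleC z x)" using assms by (rule surj_unitary_minus_scaleC)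
  show "\<bar>1 - cmod z\<bar> > 0" using assms(2) by simp
  show "\<bar>1 - cmod z\<bar> * norm x \<le> norm (U x - scaleC z x)" for x
    using assms(1) by (rule unitary_minus_scaleC_bounded_below)
qed

lemma op_invertible_add_compact:
  fixes W K :: "'a::complex_inner \<Rightarrow> 'a"
  assumes W: "bounded_clinear W" "op_invertible W" and K: "compact_op K"
    and dense: "closure (range (\<lambda>x. W x + K x)) = UNIV"
  shows "op_invertible (\<lambda>x. W x + K x)"
proof -
  define A where "A x = W x + K x" for x
  obtain R where R: "bounded_clinear R" "R \<circ> W = id" "W \<circ> R = id"
    using W(2) unfolding op_invertible_def by blast
  have RW: "R (W x) = x" and WR: "W (R x) = x" for x
    using R(2,3) by (simp_all add: fun_eq_iff)
  have bl: "bounded_linear R" "bounded_linear K"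
    using R(1) K by (simp_all add: bounded_clinear_def compact_op_def)
  interpret id_plus_compact "\<lambda>x. R (K x)"
    by (intro id_plus_compact.intro bounded_linear_compose[OF bl]
        compactly_mapping_compose[OF compact_op_imp_compactly_mapping[OF K] bl(1)])
  have RA: "R (A x) = S x" for x by (simp add: A_def S_def RW linear_simps[OF bl(1)])
  have "surj R" by (rule surjI[of R W]) (rule RW)
  then have "UNIV = R ` closure (range A)" using dense by (simp add: A_def[abs_def])
  also have "\<dots> \<subseteq> closure (R ` range A)"
    by (rule image_closure_subset) (simp_all add: linear_continuous_on bl(1) closure_subset)
  also have "R ` range A = range S" using RA by (auto simp: image_iff)
  finally have "surj S" using closed_range by (simp add: closure_closed top_le)
  moreover obtain c where "c > 0" "\<And>x. c * norm x \<le> norm (S x)"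
    using inj_imp_bounded_below[OF surj_imp_inj[OF \<open>surj S\<close>]] by blast
  moreover have "bounded_clinear S"
  proof -
    have "bounded_clinear A"
      unfolding A_def[abs_def] using W(1) K by (simp add: compact_op_def bounded_clinear_add)
    moreover have "S = (\<lambda>x. R (A x))" using RA by (simp add: fun_eq_iff)
    ultimately show ?thesis by (simp add: bounded_clinear_compose[OF R(1)])
  qed
  ultimately have "op_invertible S" by (intro op_invertibleI)
  moreover have "A = W \<circ> S" by (simp add: fun_eq_iff RA[symmetric] WR)
  ultimately show ?thesis using op_invertible_comp[OF W(2)] by (simp add: A_def[abs_def])
qed

lemma range_subset_range_minus_scaleC_of_intertwining:
  assumes X: "bounded_clinear X" and XU: "X \<circ> U = T \<circ> X"
    and surj: "surj (\<lambda>x. U x - scaleC z x)"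
  shows "range X \<subseteq> range (\<lambda>x. T x - scaleC z x)"
proof
  fix y assume "y \<in> range X"
  then obtain k' where "y = X k'" by blast
  moreover obtain k where "k' = U k - scaleC z k" using surjD[OF surj] by blast
  ultimately have "y = X (U k - scaleC z k)" by simp
  also have "\<dots> = T (X k) - scaleC z (X k)"
    using X fun_cong[OF XU, of k] by (simp add: bounded_clinear_def linear_simps)
  finally show "y \<in> range (\<lambda>x. T x - scaleC z x)" by blast
qed

theorem lemma7p1:
  fixes U :: "'k::chilbert_space \<Rightarrow> 'k"
    and T V K :: "'h::chilbert_space \<Rightarrow> 'h"
    and X :: "'k \<Rightarrow> 'h"
  assumes "unitary_op U" and "unitary_op V"
    and "compact_op K"
    and "bounded_clinear T"
    and "bounded_clinear X"
    and "T = (\<lambda>x. V x + K x)"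
    and "X \<circ> U = T \<circ> X"
    and "closure (range X) = UNIV"
  shows "op_spectrum T \<subseteq> sphere 0 1"
proof
  fix z assume spec: "z \<in> op_spectrum T"
  show "z \<in> sphere 0 1"
  proof (rule ccontr)
    assume "z \<notin> sphere 0 1"
    then have z: "cmod z \<noteq> 1" by simp
    define W where "W x = V x - scaleC z x" for x
    have TW: "(\<lambda>x. T x - scaleC z x) = (\<lambda>x. W x + K x)"
      using assms(6) by (simp add: W_def fun_eq_iff algebra_simps)
    have W: "bounded_clinear W" "op_invertible W"
      using assms(2) op_invertible_unitary_minus_scaleC[OF assms(2) z] unfolding W_def[abs_def]
      by (simp_all add: bounded_clinear_minus_scaleC unitary_op_def)
    have "range X \<subseteq> range (\<lambda>x. T x - scaleC z x)"
      using assms(5,7) surj_unitary_minus_scaleC[OF assms(1) z]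
      by (rule range_subset_range_minus_scaleC_of_intertwining)
    then have "closure (range X) \<subseteq> closure (range (\<lambda>x. W x + K x))"
      unfolding TW by (rule closure_mono)
    then have "closure (range (\<lambda>x. W x + K x)) = UNIV"
      unfolding assms(8) by (rule top_le)
    then have "op_invertible (\<lambda>x. T x - scaleC z x)"
      unfolding TW by (rule op_invertible_add_compact[OF W assms(3)])
    with spec show False by (simp add: op_spectrum_def)
  qed
qed

end
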